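(* Let $t(z),d(z)\in\mathbb{C}[[z]]$ be such that $t^2-4d$ has a simple zero at $z=0$, and let $A_0(z)\in\mathfrak{gl}_2(\mathbb{C}[[z]])$ satisfy $\operatorname{tr}A_0=t$, $\det A_0=d$. Then (1) $A_0(z)$ is a regular element of $\mathfrak{gl}_2(\mathbb{C}[[z]])$; (2) if $B(z)\in\mathfrak{gl}_2(\mathbb{C}((z)))$ satisfies $[B,A_0]=0$ and $\frac{dB}{dz}\in\mathfrak{gl}_2(\mathbb{C}[[z]])+[A_0,\mathfrak{gl}_2(\mathbb{C}((z)))]$, then $B(z)\in\mathfrak{gl}_2(\mathbb{C}[[z]])$. *)

theory Defs
  imports "HOL-Computational_Algebra.Formal_Laurent_Series"
begin

text \<open>2x2 matrices over a ring: Mat2 a11 a12 a21 a22.\<close>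
datatype 'a mat2 = Mat2 'a 'a 'a 'a

fun m2_map :: "('a \<Rightarrow> 'b) \<Rightarrow> 'a mat2 \<Rightarrow> 'b mat2" where
  "m2_map f (Mat2 a b c d) = Mat2 (f a) (f b) (f c) (f d)"

fun m2_entries :: "'a mat2 \<Rightarrow> 'a set" where
  "m2_entries (Mat2 a b c d) = {a, b, c, d}"

fun m2_add :: "'a::plus mat2 \<Rightarrow> 'a mat2 \<Rightarrow> 'a mat2" where
  "m2_add (Mat2 a b c d) (Mat2 a' b' c' d') = Mat2 (a + a') (b + b') (c + c') (d + d')"

fun m2_sub :: "'a::minus mat2 \<Rightarrow> 'a mat2 \<Rightarrow> 'a mat2" where
  "m2_sub (Mat2 a b c d) (Mat2 a' b' c' d') = Mat2 (a - a') (b - b') (c - c') (d - d')"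

fun m2_mult :: "'a::{plus,times} mat2 \<Rightarrow> 'a mat2 \<Rightarrow> 'a mat2" where
  "m2_mult (Mat2 a b c d) (Mat2 a' b' c' d') =
     Mat2 (a * a' + b * c') (a * b' + b * d') (c * a' + d * c') (c * b' + d * d')"

fun m2_smult :: "'a::times \<Rightarrow> 'a mat2 \<Rightarrow> 'a mat2" where
  "m2_smult k (Mat2 a b c d) = Mat2 (k * a) (k * b) (k * c) (k * d)"

definition m2_one :: "'a::{zero,one} mat2" where
  "m2_one = Mat2 1 0 0 1"

definition m2_zero :: "'a::zero mat2" where
  "m2_zero = Mat2 0 0 0 0"

fun m2_trace :: "'a::plus mat2 \<Rightarrow> 'a" where
  "m2_trace (Mat2 a b c d) = a + d"

fun m2_det :: "'a::{minus,times} mat2 \<Rightarrow> 'a" where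
  "m2_det (Mat2 a b c d) = a * d - b * c"

definition m2_bracket :: "'a::{minus,plus,times} mat2 \<Rightarrow> 'a mat2 \<Rightarrow> 'a mat2" where
  "m2_bracket X Y = m2_sub (m2_mult X Y) (m2_mult Y X)"

text \<open>A matrix M in gl_2(k), k a field, is regular iff its minimal polynomial equals
  its characteristic polynomial (degree 2), i.e. 1 and M are linearly independent.\<close>
definition m2_regular :: "'a::field mat2 \<Rightarrow> bool" where
  "m2_regular M \<longleftrightarrow>
     (\<forall>a b. m2_add (m2_smult a m2_one) (m2_smult b M) = m2_zero \<longrightarrow> a = 0 \<and> b = 0)"

definition gl2_fps_regular :: "'a::field fps mat2 \<Rightarrow> bool" where
  "gl2_fps_regular A \<longleftrightarrow> m2_regular (m2_map (\<lambda>f. f $ 0) A)"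

definition m2_integral :: "'a::field fls mat2 \<Rightarrow> bool" where
  "m2_integral M \<longleftrightarrow> (\<forall>x \<in> m2_entries M. x \<in> range fps_to_fls)"

end

theory Submission
  imports Defs
begin

unbundle fps_syntax

text \<open>
  Write \<delta> = tr(A)^2 - 4 det(A) = (a - d)^2 + 4bc. If A(0) were scalar, then a - d, b and c
  would all vanish at z = 0 and \<delta> would vanish to order two; hence A is regular.
  Over C((z)) a non-scalar A has centralizer spanned by 1 and A, so B = x + yA. Pairing B'
  with N = 2A - tr(A) under the trace form kills the scalar part and every commutator [A, Q],
  so the hypothesis on B' makes tr(B'N) = y'\<delta> + y\<delta>'/2 integral. Since \<delta> has a simple zero,
  this forces y to be integral, and then so is x, because tr B = 2x + y tr A has the integral
  derivative tr P.
\<close>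

abbreviation fls_integral :: "'a::zero fls \<Rightarrow> bool" where
  "fls_integral x \<equiv> x \<in> range fps_to_fls"

lemma fls_integral_iff_subdegree: "fls_integral x \<longleftrightarrow> 0 \<le> fls_subdegree x"
proof
  assume "0 \<le> fls_subdegree x"
  then have "x = fps_to_fls (fls_regpart x)" by simp
  then show "fls_integral x" by blast
qed (auto simp: fls_subdegree_fls_to_fps_gt0)

lemma fls_integral_iff_nth: "fls_integral x \<longleftrightarrow> (\<forall>n<0. x $$ n = 0)"
  unfolding fls_integral_iff_subdegree
  by (auto intro: fls_subdegree_ge0I)

lemma fls_integral_numeral [simp]: "fls_integral (numeral n :: 'a::comm_ring_1 fls)"
  by (metis fps_to_fls_numeral range_eqI)

lemma fls_integral_add [simp]: "fls_integral x \<Longrightarrow> fls_integral y \<Longrightarrow> fls_integral (x + y)"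
  by (auto simp flip: fps_to_fls_plus)

lemma fls_integral_diff [simp]: "fls_integral x \<Longrightarrow> fls_integral y \<Longrightarrow> fls_integral (x - y)"
  by (auto simp flip: fps_to_fls_minus)

lemma fls_integral_mult [simp]:
  "fls_integral x \<Longrightarrow> fls_integral y \<Longrightarrow> fls_integral (x * y :: 'a::comm_ring_1 fls)"
  by (auto simp flip: fls_times_fps_to_fls)

lemma fls_integral_cancel_2:
  fixes x :: "'a::{ring_1_no_zero_divisors, ring_char_0} fls"
  assumes "fls_integral (2 * x)"
  shows "fls_integral x"
  using assms unfolding fls_integral_iff_nth mult_2 fls_plus_nth
  by (metis mult_2 mult_eq_0_iff zero_neq_numeral)

lemma fls_integral_if_deriv_integral:
  fixes x :: "'a::{ring_1_no_zero_divisors, ring_char_0} fls"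
  assumes "fls_integral (fls_deriv x)"
  shows "fls_integral x"
proof (rule ccontr)
  assume "\<not> fls_integral x"
  then have "fls_subdegree x < 0" by (simp add: fls_integral_iff_subdegree)
  then have "fls_subdegree (fls_deriv x) < 0" by (simp add: fls_subdegree_deriv)
  with assms show False by (simp add: fls_integral_iff_subdegree)
qed

text \<open>At the lowest coefficient z^m of y the expression has coefficient (2m+1) y_m \<delta>_1,
  which does not vanish for m < 0.\<close>
lemma fls_integral_if_twisted_deriv_integral:
  fixes y :: "'a::{idom, ring_char_0} fls" and \<delta> :: "'a fps"
  assumes simple_zero: "subdegree \<delta> = 1"
    and integral: "fls_integral (2 * fls_deriv y * fps_to_fls \<delta> + y * fps_to_fls (fps_deriv \<delta>))"
  shows "fls_integral y"
proof (rule ccontr)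
  assume "\<not> fls_integral y"
  define m where "m = fls_subdegree y"
  have "m < 0" "y \<noteq> 0"
    using \<open>\<not> fls_integral y\<close> by (auto simp: m_def fls_integral_iff_subdegree)
  have "\<delta> \<noteq> 0" using simple_zero by auto
  then have "\<delta> $ 1 \<noteq> 0" using simple_zero nth_subdegree_nonzero by fastforce
  have sub_\<delta>: "fls_subdegree (fps_to_fls \<delta>) = 1"
    using simple_zero by (simp add: fls_subdegree_fls_to_fps)
  have sub_\<delta>': "fls_subdegree (fps_to_fls (fps_deriv \<delta>)) = 0"
    using \<open>\<delta> $ 1 \<noteq> 0\<close> by (intro fls_subdegree_eqI) auto
  have sub_y': "fls_subdegree (fls_deriv y) = m - 1"
    using \<open>m < 0\<close> by (simp add: m_def fls_subdegree_deriv)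
  have lowest_1: "(fls_deriv y * fps_to_fls \<delta>) $$ m = of_int m * y $$ m * \<delta> $ 1"
    using fls_times_base[of "fls_deriv y" "fps_to_fls \<delta>"] sub_y' sub_\<delta> by simp
  have lowest_2: "(y * fps_to_fls (fps_deriv \<delta>)) $$ m = y $$ m * \<delta> $ 1"
    using fls_times_base[of y "fps_to_fls (fps_deriv \<delta>)"] sub_\<delta>' m_def by simp
  have "(2 * fls_deriv y * fps_to_fls \<delta> + y * fps_to_fls (fps_deriv \<delta>)) $$ m
      = 2 * (fls_deriv y * fps_to_fls \<delta>) $$ m + (y * fps_to_fls (fps_deriv \<delta>)) $$ m"
    by (simp only: mult_2 mult.assoc fls_plus_nth distrib_right)
  also have "\<dots> = of_int (2 * m + 1) * y $$ m * \<delta> $ 1"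
    unfolding lowest_1 lowest_2 by (simp add: algebra_simps)
  finally have lowest:
    "(2 * fls_deriv y * fps_to_fls \<delta> + y * fps_to_fls (fps_deriv \<delta>)) $$ m
      = of_int (2 * m + 1) * y $$ m * \<delta> $ 1" .
  have "of_int (2 * m + 1) \<noteq> (0 :: 'a)"
    by (simp only: of_int_eq_0_iff) presburger
  moreover have "y $$ m \<noteq> 0" using \<open>y \<noteq> 0\<close> by (simp add: m_def)
  ultimately show False
    using lowest integral \<open>m < 0\<close> \<open>\<delta> $ 1 \<noteq> 0\<close> by (auto simp: fls_integral_iff_nth)
qed

definition m2_disc :: "'a::comm_ring_1 mat2 \<Rightarrow> 'a" where
  "m2_disc M = m2_trace M ^ 2 - 4 * m2_det M"

text \<open>Twice the traceless part of M, so that no division by 2 is needed.\<close>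
definition m2_trace_free :: "'a::comm_ring_1 mat2 \<Rightarrow> 'a mat2" where
  "m2_trace_free M = m2_sub (m2_smult 2 M) (m2_smult (m2_trace M) m2_one)"

lemma m2_disc_Mat2: "m2_disc (Mat2 a b c d) = (a - d) ^ 2 + 4 * b * c"
  by (simp add: m2_disc_def power2_eq_square algebra_simps)

lemma m2_regular_Mat2_iff: "m2_regular (Mat2 a b c d) \<longleftrightarrow> \<not> (b = 0 \<and> c = 0 \<and> a = d)"
proof
  assume regular: "m2_regular (Mat2 a b c d)"
  show "\<not> (b = 0 \<and> c = 0 \<and> a = d)"
  proof
    assume "b = 0 \<and> c = 0 \<and> a = d"
    then have "m2_add (m2_smult (- a) m2_one) (m2_smult 1 (Mat2 a b c d)) = m2_zero"
      by (simp add: m2_one_def m2_zero_def)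
    with regular have "(1 :: 'a) = 0" unfolding m2_regular_def by blast
    then show False by simp
  qed
next
  assume non_scalar: "\<not> (b = 0 \<and> c = 0 \<and> a = d)"
  show "m2_regular (Mat2 a b c d)"
    unfolding m2_regular_def
  proof (intro allI impI)
    fix \<alpha> \<beta>
    assume "m2_add (m2_smult \<alpha> m2_one) (m2_smult \<beta> (Mat2 a b c d)) = m2_zero"
    then have entries: "\<alpha> + \<beta> * a = 0" "\<beta> * b = 0" "\<beta> * c = 0" "\<alpha> + \<beta> * d = 0"
      by (simp_all add: m2_one_def m2_zero_def)
    have "\<beta> * (a - d) = (\<alpha> + \<beta> * a) - (\<alpha> + \<beta> * d)"
      by (simp add: algebra_simps)
    with entries non_scalar have "\<beta> = 0" by auto
    with entries show "\<alpha> = 0 \<and> \<beta> = 0" by simp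
  qed
qed

lemma m2_regular_if_disc_nonzero: "m2_disc M \<noteq> 0 \<Longrightarrow> m2_regular (M :: 'a::field mat2)"
  by (cases M) (auto simp: m2_regular_Mat2_iff m2_disc_Mat2)

lemma gl2_fps_regular_if_simple_zero:
  fixes A :: "'a::field fps mat2"
  assumes simple_zero: "subdegree (m2_disc A) = 1"
  shows "gl2_fps_regular A"
proof (rule ccontr)
  obtain a b c d where A: "A = Mat2 a b c d" by (cases A)
  assume "\<not> gl2_fps_regular A"
  then have "a $ 0 = d $ 0" "b $ 0 = 0" "c $ 0 = 0"
    by (auto simp: gl2_fps_regular_def m2_regular_Mat2_iff A)
  then have "m2_disc A $ 1 = 0"
    by (simp add: A m2_disc_Mat2 power2_eq_square fps_mult_nth fps_numeral_nth algebra_simps)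
  moreover have "m2_disc A \<noteq> 0" using simple_zero by auto
  ultimately show False using simple_zero nth_subdegree_nonzero by fastforce
qed

lemma m2_centralizer_of_regular:
  fixes A B :: "'a::field mat2"
  assumes "m2_regular A" and "m2_bracket B A = m2_zero"
  shows "\<exists>x y. B = m2_add (m2_smult x m2_one) (m2_smult y A)"
proof -
  obtain a b c d where A: "A = Mat2 a b c d" by (cases A)
  obtain u v w s where B: "B = Mat2 u v w s" by (cases B)
  have non_scalar: "\<not> (b = 0 \<and> c = 0 \<and> a = d)"
    using assms(1) by (simp add: A m2_regular_Mat2_iff)
  from assms(2) have "v * c = b * w" "u * b + v * d = a * v + b * s" "w * a + s * c = c * u + d * w"
    by (auto simp: A B m2_bracket_def m2_zero_def)
  then have comm: "b * w = c * v" "(a - d) * v = b * (u - s)" "(a - d) * w = c * (u - s)"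
    by (simp_all add: algebra_simps)
  have "\<exists>y. v = y * b \<and> w = y * c \<and> u - s = y * (a - d)"
  proof (cases "b = 0")
    case False
    with comm show ?thesis by (intro exI[of _ "v / b"]) (auto simp: field_simps)
  next
    case b: True
    show ?thesis
    proof (cases "c = 0")
      case False
      with b comm show ?thesis by (intro exI[of _ "w / c"]) (auto simp: field_simps)
    next
      case True
      with b non_scalar comm show ?thesis by (intro exI[of _ "(u - s) / (a - d)"]) auto
    qed
  qed
  then obtain y where "v = y * b" "w = y * c" "u - s = y * (a - d)" by blast
  then have "B = m2_add (m2_smult (u - y * a) m2_one) (m2_smult y A)"
    by (simp add: A B m2_one_def algebra_simps)
  then show ?thesis by blast
qed

lemma m2_trace_add_bracket:
  fixes P A Q :: "'a::comm_ring_1 mat2"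
  shows "m2_trace (m2_add P (m2_bracket A Q)) = m2_trace P"
  by (cases P; cases A; cases Q) (simp add: m2_bracket_def algebra_simps)

lemma m2_trace_add_bracket_mult_trace_free:
  fixes P A Q :: "'a::comm_ring_1 mat2"
  shows "m2_trace (m2_mult (m2_add P (m2_bracket A Q)) (m2_trace_free A))
    = m2_trace (m2_mult P (m2_trace_free A))"
  by (cases P; cases A; cases Q) (simp add: m2_bracket_def m2_trace_free_def m2_one_def algebra_simps)

lemma m2_trace_span:
  fixes A :: "'a::comm_ring_1 mat2"
  shows "m2_trace (m2_add (m2_smult x m2_one) (m2_smult y A)) = 2 * x + y * m2_trace A"
  by (cases A) (simp add: m2_one_def algebra_simps)

lemma m2_trace_map_fls_deriv: "m2_trace (m2_map fls_deriv B) = fls_deriv (m2_trace B)"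
  by (cases B) simp

lemma m2_trace_deriv_span_mult_trace_free:
  fixes A :: "'a::comm_ring_1 fls mat2"
  shows "2 * m2_trace (m2_mult (m2_map fls_deriv (m2_add (m2_smult x m2_one) (m2_smult y A)))
                               (m2_trace_free A))
    = 2 * fls_deriv y * m2_disc A + y * fls_deriv (m2_disc A)"
  by (cases A) (simp add: m2_trace_free_def m2_disc_def m2_one_def power2_eq_square algebra_simps)

lemma m2_disc_map_fps_to_fls: "m2_disc (m2_map fps_to_fls A) = fps_to_fls (m2_disc A)"
  by (cases A) (simp add: m2_disc_Mat2 fps_to_fls_power fls_times_fps_to_fls)

lemma m2_integral_map_fps_to_fls: "m2_integral (m2_map fps_to_fls A)"
  by (cases A) (simp add: m2_integral_def)

lemma fls_integral_trace:
  fixes M :: "'a::field fls mat2"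
  shows "m2_integral M \<Longrightarrow> fls_integral (m2_trace M)"
  by (cases M) (simp add: m2_integral_def)

lemma fls_integral_trace_mult_trace_free:
  fixes P A :: "'a::field fls mat2"
  assumes "m2_integral P" and "m2_integral A"
  shows "fls_integral (m2_trace (m2_mult P (m2_trace_free A)))"
  using assms by (cases P; cases A) (simp add: m2_integral_def m2_trace_free_def m2_one_def)

lemma m2_integral_span:
  fixes A :: "'a::field fls mat2"
  assumes "fls_integral x" and "fls_integral y" and "m2_integral A"
  shows "m2_integral (m2_add (m2_smult x m2_one) (m2_smult y A))"
  using assms by (cases A) (simp add: m2_integral_def m2_one_def)

lemma m2_integral_if_commuting_with_integral_deriv:
  fixes A0 :: "'a::field_char_0 fps mat2" and B P Q :: "'a fls mat2"
  assumes simple_zero: "subdegree (m2_disc A0) = 1"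
    and commute: "m2_bracket B (m2_map fps_to_fls A0) = m2_zero"
    and "m2_integral P"
    and deriv: "m2_map fls_deriv B = m2_add P (m2_bracket (m2_map fps_to_fls A0) Q)"
  shows "m2_integral B"
proof -
  define A where "A = m2_map fps_to_fls A0"
  have disc: "m2_disc A = fps_to_fls (m2_disc A0)"
    by (simp add: A_def m2_disc_map_fps_to_fls)
  have "m2_disc A0 \<noteq> 0" using simple_zero by auto
  then have "m2_regular A" by (simp add: disc m2_regular_if_disc_nonzero)
  then obtain x y where B: "B = m2_add (m2_smult x m2_one) (m2_smult y A)"
    using commute m2_centralizer_of_regular unfolding A_def by blast
  have "fls_integral (2 * m2_trace (m2_mult (m2_map fls_deriv B) (m2_trace_free A)))"
    using deriv \<open>m2_integral P\<close>
    by (simp add: A_def m2_trace_add_bracket_mult_trace_free fls_integral_trace_mult_trace_free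
        m2_integral_map_fps_to_fls)
  then have "fls_integral
      (2 * fls_deriv y * fps_to_fls (m2_disc A0) + y * fps_to_fls (fps_deriv (m2_disc A0)))"
    by (simp add: B m2_trace_deriv_span_mult_trace_free disc fls_deriv_fps_to_fls)
  then have y: "fls_integral y"
    using simple_zero by (rule fls_integral_if_twisted_deriv_integral[rotated])
  have "fls_integral (fls_deriv (m2_trace B))"
    using deriv \<open>m2_integral P\<close>
    by (simp add: m2_trace_map_fls_deriv [symmetric] m2_trace_add_bracket fls_integral_trace)
  then have "fls_integral (m2_trace B)" by (rule fls_integral_if_deriv_integral)
  then have "fls_integral (m2_trace B - y * m2_trace A)"
    using y by (simp add: A_def fls_integral_trace m2_integral_map_fps_to_fls)
  moreover have "m2_trace B - y * m2_trace A = 2 * x"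
    by (simp add: B m2_trace_span)
  ultimately have "fls_integral (2 * x)" by simp
  then have "fls_integral x" by (rule fls_integral_cancel_2)
  with y show ?thesis by (simp add: B A_def m2_integral_span m2_integral_map_fps_to_fls)
qed

theorem lemma4p1:
  fixes t d :: "complex fps" and A0 :: "complex fps mat2"
  assumes simple_zero: "subdegree (t\<^sup>2 - 4 * d) = 1"
    and tr: "m2_trace A0 = t"
    and det: "m2_det A0 = d"
  shows "gl2_fps_regular A0 \<and>
         (\<forall>B :: complex fls mat2.
           m2_bracket B (m2_map fps_to_fls A0) = m2_zero \<and>
           (\<exists>P Q. m2_integral P \<and>
              m2_map fls_deriv B = m2_add P (m2_bracket (m2_map fps_to_fls A0) Q)) \<longrightarrow>
           m2_integral B)"
proof -
  have "subdegree (m2_disc A0) = 1"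
    using simple_zero by (simp add: m2_disc_def tr det)
  then show ?thesis
    using gl2_fps_regular_if_simple_zero m2_integral_if_commuting_with_integral_deriv by blast
qed

end
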